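(* Let $q$ be a power of an odd prime, let $d\geq 3$ be odd, and let $E,F\subset \mathbb F_q^d$ be nonempty. Then $$ |\Delta(E,F)|\geq \begin{cases} \min \left\{ \frac{q}{2}, \frac{|E||F|}{8q^{d-1}}\right\} &\text{if } 1\leq |E|< q^{\frac{d-1}{2}},\\[2pt] \min \left\{ \frac{q}{2}, \frac{|F|}{8q^{\frac{d-1}{2}}}\right\} &\text{if } q^{\frac{d-1}{2}}\leq |E|< q^{\frac{d+1}{2}},\\[2pt] \min \left\{ \frac{q}{2}, \frac{|E||F|}{2q^{d}}\right\} &\text{if } q^{\frac{d+1}{2}} \leq |E|\leq q^{d}. \end{cases}$$
   Context: $\mathbb F_q$ is the finite field with $q$ elements, of characteristic greater than two. For $m=(m_1,\dots,m_d)\in\mathbb F_q^d$ put $\|m\|=m_1^2+\dots+m_d^2\in\mathbb F_q$. For $E,F\subset\mathbb F_q^d$ the distance set is $\Delta(E,F)=\{\|x-y\|\in\mathbb F_q: x\in E,\ y\in F\}$. *)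

theory Defs
  imports "HOL-Analysis.Analysis"
begin

definition ffnorm :: "('a::comm_ring_1) ^ 'n \<Rightarrow> 'a" where
  "ffnorm m = (\<Sum>i\<in>UNIV. (m $ i) ^ 2)"

definition dist_set :: "(('a::comm_ring_1) ^ 'n) set \<Rightarrow> ('a ^ 'n) set \<Rightarrow> 'a set" where
  "dist_set E F = {ffnorm (x - y) | x y. x \<in> E \<and> y \<in> F}"

end

theory Submission
  imports Defs
begin

text \<open>Writing \<open>\<nu>(t)\<close> for the number of pairs \<open>(x, y) \<in> E \<times> F\<close> with \<open>\<parallel>x - y\<parallel> = t\<close>,
  Cauchy--Schwarz gives \<open>(|E| |F|)\<^sup>2 \<le> |\<Delta>(E,F)| \<Sum>\<^sub>t \<nu>(t)\<^sup>2\<close>. The second moment is controlled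
  by Fourier analysis with a nontrivial additive character of \<open>\<bbbF>\<^sub>q\<close>: Parseval in the dilation
  parameter and the evaluation of Gaussian sums give
  \<open>q \<Sum>\<^sub>t \<nu>(t)\<^sup>2 \<le> (|E| |F|)\<^sup>2 + q M |F|\<close>, where \<open>M\<close> bounds the Fourier mass of \<open>E\<close> on every
  sphere \<open>\<parallel>m\<parallel> = u\<close>. In odd dimension the Fourier transform of a sphere is a Sali\<acute>e sum, whose
  square-root cancellation yields \<open>M \<le> q\<^bsup>d-1\<^esup> |E| + 2 q\<^bsup>(d-1)/2\<^esup> |E|\<^sup>2\<close>, while Plancherel
  gives \<open>M \<le> q\<^bsup>d\<^esup> |E|\<close>; the three ranges of \<open>|E|\<close> record which term dominates.\<close>

section \<open>Additive characters\<close>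

definition add_subgroup :: "'a::ring_1 set \<Rightarrow> bool" where
  "add_subgroup H \<longleftrightarrow> 0 \<in> H \<and> (\<forall>x\<in>H. \<forall>y\<in>H. x + y \<in> H) \<and> (\<forall>x\<in>H. - x \<in> H)"

lemma add_subgroup_diff: "add_subgroup H \<Longrightarrow> x \<in> H \<Longrightarrow> y \<in> H \<Longrightarrow> x - y \<in> H"
  unfolding add_subgroup_def by (metis diff_conv_add_uminus)

lemma add_subgroup_of_int_mult:
  assumes "add_subgroup H" "h \<in> H" shows "of_int k * h \<in> H"
proof -
  have nat_mult: "of_nat n * h \<in> H" for n
    by (induction n) (use assms in \<open>auto simp: add_subgroup_def algebra_simps\<close>)
  show ?thesis
  proof (cases "k \<ge> 0")
    case True
    then show ?thesis using nat_mult[of "nat k"] by simp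
  next
    case False
    then obtain n where "k = - int n" by (intro that[of "nat (- k)"]) simp
    then show ?thesis using nat_mult[of n] assms(1) by (simp add: add_subgroup_def)
  qed
qed

lemma add_subgroup_add_int_multiples:
  assumes H: "add_subgroup H"
  shows "add_subgroup {h + of_int k * g | h k. h \<in> H}"
  unfolding add_subgroup_def
proof (intro conjI ballI)
  have "(0::'a) = 0 + of_int 0 * g" "(0::'a) \<in> H" using H by (auto simp: add_subgroup_def)
  then show "0 \<in> {h + of_int k * g | h k. h \<in> H}" by blast
next
  fix x y assume "x \<in> {h + of_int k * g | h k. h \<in> H}" "y \<in> {h + of_int k * g | h k. h \<in> H}"
  then obtain h1 k1 h2 k2 where "h1 \<in> H" "h2 \<in> H" "x = h1 + of_int k1 * g" "y = h2 + of_int k2 * g"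
    by blast
  then have "x + y = (h1 + h2) + of_int (k1 + k2) * g" "h1 + h2 \<in> H"
    using H by (auto simp: algebra_simps add_subgroup_def)
  then show "x + y \<in> {h + of_int k * g | h k. h \<in> H}" by blast
next
  fix x assume "x \<in> {h + of_int k * g | h k. h \<in> H}"
  then obtain h k where "h \<in> H" "x = h + of_int k * g" by blast
  then have "- x = (- h) + of_int (- k) * g" "- h \<in> H"
    using H by (auto simp: algebra_simps add_subgroup_def)
  then show "- x \<in> {h + of_int k * g | h k. h \<in> H}" by blast
qed

text \<open>A maximal proper additive subgroup \<open>H\<close> has index \<open>CHAR('a)\<close>: every element is
  \<open>h + k g\<close> for any fixed \<open>g \<notin> H\<close>, with \<open>k\<close> unique modulo the characteristic.\<close>

lemma exists_add_subgroup_complement: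
  "\<exists>H g::'a::{ring_1,finite}. add_subgroup H \<and> g \<notin> H \<and> (\<forall>x. \<exists>h\<in>H. \<exists>k. x = h + of_int k * g)"
proof -
  define P where "P = (\<lambda>K::'a set. add_subgroup K \<and> K \<noteq> UNIV)"
  have "P {0}"
  proof -
    have "(1::'a) \<notin> {0}" by simp
    then have "{0::'a} \<noteq> UNIV" by blast
    then show ?thesis unfolding P_def add_subgroup_def by simp
  qed
  moreover have "\<forall>K. P K \<longrightarrow> card K < CARD('a) + 1"
    by (simp add: card_mono less_Suc_eq_le)
  ultimately obtain H where PH: "P H" and H_max: "\<And>K. P K \<Longrightarrow> card K \<le> card H"
    using ex_has_greatest_nat[of P "{0}" card] by blast
  then have H: "add_subgroup H" and "H \<noteq> UNIV" by (auto simp: P_def)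
  then obtain g where g: "g \<notin> H" by blast
  define H' where "H' = {h + of_int k * g | h k. h \<in> H}"
  have "H \<subseteq> H'"
  proof
    fix x assume "x \<in> H"
    moreover have "x = x + of_int 0 * g" by simp
    ultimately show "x \<in> H'" unfolding H'_def by blast
  qed
  moreover have "g \<in> H'"
  proof -
    have "g = 0 + of_int 1 * g" "(0::'a) \<in> H" using H by (auto simp: add_subgroup_def)
    then show ?thesis unfolding H'_def by blast
  qed
  moreover note add_subgroup_add_int_multiples[OF H, of g, folded H'_def]
  ultimately have "H' = UNIV"
    using H_max[of H'] psubset_card_mono[of H' H] g unfolding P_def by fastforce
  then have "\<forall>x. \<exists>h\<in>H. \<exists>k. x = h + of_int k * g" unfolding H'_def by blast
  then show ?thesis using H g by blast
qed

lemma add_subgroup_complement_unique: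
  fixes H :: "'a::{ring_1,finite} set"
  assumes "prime CHAR('a)" "add_subgroup H" "g \<notin> H" "h1 \<in> H" "h2 \<in> H"
    and eq: "h1 + of_int a * g = h2 + of_int b * g"
  shows "int CHAR('a) dvd a - b"
proof (rule ccontr)
  assume "\<not> int CHAR('a) dvd a - b"
  then have "coprime (int CHAR('a)) (a - b)"
    using assms(1) by (simp add: prime_imp_coprime)
  then obtain u v where uv: "u * (a - b) + v * int CHAR('a) = 1"
    by (metis bezout_int coprime_iff_gcd_eq_1 mult.commute add.commute)
  have "of_int (a - b) * g = h2 - h1" using eq by (simp add: algebra_simps)
  then have "of_int u * (of_int (a - b) * g) \<in> H"
    using assms by (simp add: add_subgroup_diff add_subgroup_of_int_mult)
  moreover have "of_int u * (of_int (a - b) * g) = g"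
  proof -
    have "of_int u * (of_int (a - b) * g) = of_int (u * (a - b)) * g"
      by (simp only: of_int_mult mult.assoc)
    also have "u * (a - b) = 1 - v * int CHAR('a)" using uv by linarith
    also have "of_int (1 - v * int CHAR('a)) * g = g - of_int v * (of_nat CHAR('a) * g)"
      by (simp add: algebra_simps)
    finally show ?thesis by simp
  qed
  ultimately show False using assms(3) by simp
qed

lemma exp_two_pi_int_eq_1_iff:
  assumes "p > 0"
  shows "exp (2 * of_real pi * \<i> * of_int k / of_nat p) = 1 \<longleftrightarrow> int p dvd k"
proof
  assume "exp (2 * of_real pi * \<i> * of_int k / of_nat p) = 1"
  then obtain n where "Im (2 * of_real pi * \<i> * of_int k / of_nat p) = real_of_int (2 * n) * pi"
    unfolding exp_eq_1 by blast
  then have "real_of_int k = real_of_int (n * int p)" using assms by (simp add: field_simps)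
  then show "int p dvd k" by (simp only: of_int_eq_iff) simp
next
  assume "int p dvd k"
  then obtain t where "k = int p * t" by blast
  then have eq: "2 * of_real pi * \<i> * of_int k / of_nat p = complex_of_real (2 * real_of_int t * pi) * \<i>"
    using assms by (simp add: field_simps)
  show "exp (2 * of_real pi * \<i> * of_int k / of_nat p) = 1"
    by (subst eq, intro exp_integer_2pi) simp
qed

lemma sum_UNIV_remove_0:
  fixes f :: "'a::{zero,finite} \<Rightarrow> 'b::comm_monoid_add"
  shows "(\<Sum>x\<in>UNIV. f x) = f 0 + (\<Sum>x\<in>-{0}. f x)"
  unfolding Compl_eq_Diff_UNIV by (rule sum.remove) simp_all

locale additive_character =
  fixes chi :: "'a::{field,finite} \<Rightarrow> complex"
  assumes chi_add: "chi (x + y) = chi x * chi y"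
    and norm_chi: "norm (chi x) = 1"
    and chi_nontrivial: "\<exists>g. chi g \<noteq> 1"

lemma exists_additive_index:
  "\<exists>k::'a::{field,finite} \<Rightarrow> int. (\<forall>x y. int CHAR('a) dvd k (x + y) - (k x + k y))
                                  \<and> (\<exists>g. \<not> int CHAR('a) dvd k g)"
proof -
  have "prime CHAR('a)" by (rule prime_CHAR_semidom) (simp add: finite_imp_CHAR_pos)
  obtain H and g :: 'a where H: "add_subgroup H" and g: "g \<notin> H"
    and rep: "\<And>x. \<exists>h\<in>H. \<exists>k. x = h + of_int k * g"
    using exists_add_subgroup_complement by blast
  define k where "k x = (SOME k. \<exists>h\<in>H. x = h + of_int k * g)" for x
  have k: "\<exists>h\<in>H. x = h + of_int (k x) * g" for x
  proof -
    have "\<exists>k. \<exists>h\<in>H. x = h + of_int k * g" using rep by blast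
    then show ?thesis unfolding k_def by (rule someI_ex)
  qed
  have k_congr: "int CHAR('a) dvd a - b"
    if "h \<in> H" "x = h + of_int a * g" "x = h' + of_int b * g" "h' \<in> H" for x h h' a b
    using add_subgroup_complement_unique[OF \<open>prime CHAR('a)\<close> H g, of h h' a b] that by simp
  have "int CHAR('a) dvd k (x + y) - (k x + k y)" for x y
  proof -
    obtain h1 where h1: "h1 \<in> H" "x = h1 + of_int (k x) * g" using k by blast
    obtain h2 where h2: "h2 \<in> H" "y = h2 + of_int (k y) * g" using k by blast
    obtain h3 where h3: "h3 \<in> H" "x + y = h3 + of_int (k (x + y)) * g" using k by blast
    have "x + y = (h1 + h2) + of_int (k x + k y) * g"
      by (subst h1(2), subst h2(2)) (simp add: algebra_simps)
    moreover have "h1 + h2 \<in> H" using h1 h2 H by (simp add: add_subgroup_def)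
    ultimately show ?thesis by (rule k_congr[OF h3(1) h3(2)])
  qed
  moreover have "\<not> int CHAR('a) dvd k g"
  proof
    assume "int CHAR('a) dvd k g"
    moreover obtain h where "h \<in> H" "g = h + of_int (k g) * g" using k by blast
    then have "int CHAR('a) dvd 1 - k g"
      using k_congr[of 0 g 1] H by (simp add: add_subgroup_def)
    ultimately have "int CHAR('a) dvd 1" using dvd_add by fastforce
    then show False using \<open>prime CHAR('a)\<close> by (simp add: prime_gt_1_nat)
  qed
  ultimately show ?thesis by blast
qed

lemma exists_additive_character: "\<exists>chi::'a::{field,finite} \<Rightarrow> complex. additive_character chi"
proof -
  define p where "p = CHAR('a)"
  have p: "p > 0" unfolding p_def by (simp add: finite_imp_CHAR_pos)
  obtain k :: "'a \<Rightarrow> int" and g where k_add: "\<And>x y. int p dvd k (x + y) - (k x + k y)"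
    and k_nontrivial: "\<not> int p dvd k g"
    using exists_additive_index unfolding p_def by blast
  define e where "e j = exp (2 * of_real pi * \<i> * of_int j / of_nat p)" for j
  have e_add: "e (a + b) = e a * e b" for a b
    unfolding e_def by (simp add: add_divide_distrib distrib_left exp_add)
  have e_1: "e j = 1 \<longleftrightarrow> int p dvd j" for j
    unfolding e_def using exp_two_pi_int_eq_1_iff[OF p] .
  define chi where "chi x = e (k x)" for x
  have "chi (x + y) = chi x * chi y" for x y
    using e_add[of "k (x + y) - (k x + k y)" "k x + k y"] e_add[of "k x" "k y"] e_1 k_add[of x y]
    unfolding chi_def by simp
  moreover have "norm (chi x) = 1" for x
    unfolding chi_def e_def norm_exp_eq_Re by simp
  moreover have "chi g \<noteq> 1" unfolding chi_def e_1 by (rule k_nontrivial)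
  ultimately have "additive_character chi" by unfold_locales blast+
  then show ?thesis by blast
qed

context additive_character
begin

lemma chi_nonzero: "chi x \<noteq> 0"
  using norm_chi[of x] by auto

lemma chi_0 [simp]: "chi 0 = 1"
proof -
  have "chi 0 * chi 0 = chi 0 * 1" using chi_add[of 0 0] by simp
  then show ?thesis using chi_nonzero[of 0] by (metis mult_left_cancel)
qed

lemma chi_minus: "chi (- x) = cnj (chi x)"
proof -
  have "chi x * cnj (chi x) = complex_of_real ((norm (chi x))\<^sup>2)"
    by (rule complex_norm_square[symmetric])
  then have "chi x * cnj (chi x) = 1" by (simp add: norm_chi)
  moreover have "chi x * chi (- x) = 1" using chi_add[of x "- x"] by simp
  ultimately have "chi x * chi (- x) = chi x * cnj (chi x)" by simp
  then show ?thesis using chi_nonzero[of x] by (metis mult_left_cancel)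
qed

lemma chi_diff: "chi (x - y) = chi x * cnj (chi y)"
  using chi_add[of x "- y"] chi_minus[of y] by simp

lemma chi_sum: "chi (\<Sum>i\<in>I. f i) = (\<Prod>i\<in>I. chi (f i))"
  by (induction I rule: infinite_finite_induct) (simp_all add: chi_add)

lemma sum_chi: "(\<Sum>x\<in>UNIV. chi x) = 0"
proof -
  obtain g where g: "chi g \<noteq> 1" using chi_nontrivial by blast
  have "(\<Sum>x\<in>UNIV. chi (x + g)) = (\<Sum>x\<in>UNIV. chi x)"
    by (rule sum.reindex_bij_witness[of _ "\<lambda>x. x - g" "\<lambda>x. x + g"]) auto
  moreover have "(\<Sum>x\<in>UNIV. chi (x + g)) = chi g * (\<Sum>x\<in>UNIV. chi x)"
    by (simp add: chi_add sum_distrib_left mult.commute)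
  ultimately have "(chi g - 1) * (\<Sum>x\<in>UNIV. chi x) = 0" by (simp add: algebra_simps)
  then show ?thesis using g by simp
qed

lemma sum_chi_nonzero: "(\<Sum>x\<in>-{0}. chi x) = -1"
  using sum_UNIV_remove_0[of chi] sum_chi by (simp add: eq_neg_iff_add_eq_0 add.commute)

lemma sum_chi_mult: "(\<Sum>x\<in>UNIV. chi (c * x)) = (if c = 0 then of_nat CARD('a) else 0)"
proof (cases "c = 0")
  case False
  have "(\<Sum>x\<in>UNIV. chi (c * x)) = (\<Sum>x\<in>UNIV. chi x)"
    by (rule sum.reindex_bij_witness[of _ "\<lambda>x. x / c" "\<lambda>x. c * x"]) (use False in auto)
  then show ?thesis using False sum_chi by simp
qed simp

end

section \<open>The quadratic character\<close>

definition is_square :: "'a::field \<Rightarrow> bool" where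
  "is_square x \<longleftrightarrow> (\<exists>y. x = y * y)"

definition quad_char :: "'a::field \<Rightarrow> complex" where
  "quad_char x = (if x = 0 then 0 else if is_square x then 1 else -1)"

lemma quad_char_0 [simp]: "quad_char 0 = 0"
  by (simp add: quad_char_def)

lemma norm_quad_char_le: "norm (quad_char x) \<le> 1"
  by (simp add: quad_char_def)

lemma quad_char_square_mult:
  assumes "y \<noteq> 0" shows "quad_char (y * y * x) = quad_char x"
proof -
  have "is_square (y * y * x) \<longleftrightarrow> is_square x"
  proof
    assume "is_square (y * y * x)"
    then obtain b where "y * y * x = b * b" by (auto simp: is_square_def)
    then have "x = (b / y) * (b / y)" using assms by (simp add: field_simps)
    then show "is_square x" unfolding is_square_def by blast
  next
    assume "is_square x"
    then obtain b where "x = b * b" by (auto simp: is_square_def)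
    then have "y * y * x = (y * b) * (y * b)" by (simp add: algebra_simps)
    then show "is_square (y * y * x)" unfolding is_square_def by blast
  qed
  then show ?thesis using assms by (simp add: quad_char_def)
qed

lemma quad_char_square [simp]: "y \<noteq> 0 \<Longrightarrow> quad_char (y * y) = 1"
  by (auto simp: quad_char_def is_square_def)

lemma quad_char_inverse: "quad_char (inverse x) = quad_char x"
proof (cases "x = 0")
  case False
  have "quad_char (inverse x) = quad_char (inverse x * inverse x * x)"
    using False by (simp add: field_simps)
  also have "\<dots> = quad_char x" using False by (intro quad_char_square_mult) simp
  finally show ?thesis .
qed simp

context
  assumes two_neq_zero: "(2::'a::{field,finite}) \<noteq> 0"
begin

lemma four_neq_zero: "(4::'a) \<noteq> 0"
  using two_neq_zero mult_eq_0_iff[of "2::'a" 2] by simp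

lemma card_square_roots:
  "card {y::'a. y * y = x} = (if x = 0 then 1 else if is_square x then 2 else 0)"
proof -
  consider "x = 0" | "x \<noteq> 0" "is_square x" | "\<not> is_square x" by blast
  then show ?thesis
  proof cases
    case 1
    then have "{y::'a. y * y = x} = {0}" by auto
    then show ?thesis using 1 by simp
  next
    case 2
    then obtain a where a: "x = a * a" by (auto simp: is_square_def)
    then have "a \<noteq> 0" using 2 by auto
    have "{y::'a. y * y = x} = {a, - a}"
    proof (rule set_eqI, rule iffI)
      fix y assume "y \<in> {y. y * y = x}"
      then have "(y - a) * (y + a) = 0" using a by (simp add: algebra_simps)
      then show "y \<in> {a, - a}" by (auto simp: eq_neg_iff_add_eq_0)
    qed (auto simp: a)
    moreover have "a \<noteq> - a"
    proof
      assume "a = - a"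
      then have "a + a = - a + a" by (rule arg_cong)
      then have "2 * a = 0" by (simp only: mult_2 left_minus)
      then show False using \<open>a \<noteq> 0\<close> two_neq_zero by simp
    qed
    ultimately show ?thesis using 2 by simp
  next
    case 3
    then have "{y::'a. y * y = x} = {}" by (auto simp: is_square_def)
    then show ?thesis using 3 by (auto simp: is_square_def)
  qed
qed

lemma of_nat_card_square_roots: "of_nat (card {y::'a. y * y = x}) = 1 + quad_char x"
  by (simp add: card_square_roots quad_char_def)

lemma card_square_roots_le_2: "card {y::'a. y * y = x} \<le> 2"
  by (simp add: card_square_roots)

lemma sum_squares_quad_char:
  "(\<Sum>x\<in>UNIV. f (x * x)) = (\<Sum>y\<in>UNIV. (1 + quad_char y) * f (y::'a))"
proof -
  have "(\<Sum>x\<in>UNIV. f (x * x)) = (\<Sum>y\<in>UNIV. \<Sum>x\<in>{x\<in>UNIV. x * x = y}. f (x * x))"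
    by (rule sum.group[symmetric]) auto
  also have "\<dots> = (\<Sum>y\<in>UNIV. (1 + quad_char y) * f y)"
  proof (rule sum.cong)
    fix y :: 'a
    have "(\<Sum>x\<in>{x\<in>UNIV. x * x = y}. f (x * x)) = of_nat (card {x. x * x = y}) * f y"
      by simp
    then show "(\<Sum>x\<in>{x\<in>UNIV. x * x = y}. f (x * x)) = (1 + quad_char y) * f y"
      by (simp only: of_nat_card_square_roots)
  qed simp
  finally show ?thesis .
qed

lemma sum_quad_char: "(\<Sum>y\<in>UNIV. quad_char (y::'a)) = 0"
  using sum_squares_quad_char[of "\<lambda>_. (1::complex)"] by (simp add: sum.distrib)

lemma card_squares_eq_card_nonsquares:
  "card {x::'a. x \<noteq> 0 \<and> is_square x} = card {x::'a. x \<noteq> 0 \<and> \<not> is_square x}"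
proof -
  define A where "A = {x::'a. x \<noteq> 0 \<and> is_square x}"
  define B where "B = {x::'a. x \<noteq> 0 \<and> \<not> is_square x}"
  have U: "(UNIV::'a set) = insert 0 (A \<union> B)" by (auto simp: A_def B_def)
  have "(\<Sum>y\<in>(UNIV::'a set). quad_char y) = quad_char (0::'a) + (\<Sum>y\<in>A \<union> B. quad_char y)"
    unfolding U by (subst sum.insert) (auto simp: A_def B_def)
  also have "\<dots> = (\<Sum>y\<in>A. quad_char y) + (\<Sum>y\<in>B. quad_char y)"
    by (subst sum.union_disjoint) (auto simp: A_def B_def)
  also have "\<dots> = (\<Sum>y\<in>A. 1) + (\<Sum>y\<in>B. -1)"
    by (intro arg_cong2[where f = "(+)"] sum.cong) (auto simp: A_def B_def quad_char_def)
  finally have "of_nat (card A) - of_nat (card B) = (0::complex)"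
    using sum_quad_char by simp
  then show ?thesis by (simp add: A_def B_def)
qed

text \<open>Multiplication by a nonsquare maps the nonzero squares injectively, hence (by the count
  above) bijectively, onto the nonsquares.\<close>

lemma is_square_mult_nonsquares:
  fixes x y :: 'a
  assumes x: "x \<noteq> 0" "\<not> is_square x" and y: "y \<noteq> 0" "\<not> is_square y"
  shows "is_square (x * y)"
proof -
  define A where "A = {x::'a. x \<noteq> 0 \<and> is_square x}"
  define B where "B = {x::'a. x \<noteq> 0 \<and> \<not> is_square x}"
  have sub: "(\<lambda>s. y * s) ` A \<subseteq> B"
  proof
    fix z assume "z \<in> (\<lambda>s. y * s) ` A"
    then obtain s where s: "s \<in> A" "z = y * s" by blast
    then obtain c where c: "s = c * c" "c \<noteq> 0" by (auto simp: A_def is_square_def)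
    have "\<not> is_square z"
    proof
      assume "is_square z"
      then obtain b where "z = b * b" by (auto simp: is_square_def)
      then have "y = (b / c) * (b / c)" using s c by (simp add: field_simps)
      then show False using y(2) unfolding is_square_def by blast
    qed
    moreover have "z \<noteq> 0" using s y by (auto simp: A_def)
    ultimately show "z \<in> B" by (simp add: B_def)
  qed
  have "inj_on (\<lambda>s. y * s) A" using y by (auto simp: inj_on_def)
  then have "card ((\<lambda>s. y * s) ` A) = card B"
    using card_squares_eq_card_nonsquares by (simp add: card_image A_def B_def)
  then have "(\<lambda>s. y * s) ` A = B" using sub by (intro card_subset_eq) auto
  then have "x \<in> (\<lambda>s. y * s) ` A" using x by (auto simp: B_def)
  then obtain c where "x = y * (c * c)" by (auto simp: A_def is_square_def)
  then have "x * y = (y * c) * (y * c)" by (simp add: algebra_simps)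
  then show ?thesis unfolding is_square_def by blast
qed

lemma quad_char_mult: "quad_char ((x::'a) * y) = quad_char x * quad_char y"
proof -
  consider "x = 0 \<or> y = 0" | a where "x \<noteq> 0" "y \<noteq> 0" "x = a * a"
    | b where "x \<noteq> 0" "y \<noteq> 0" "y = b * b" | "x \<noteq> 0" "y \<noteq> 0" "\<not> is_square x" "\<not> is_square y"
    unfolding is_square_def by blast
  then show ?thesis
  proof cases
    case (2 a)
    then show ?thesis using quad_char_square_mult[of a y] by auto
  next
    case (3 b)
    then show ?thesis using quad_char_square_mult[of b x] by (auto simp: mult.commute)
  next
    case 4
    then show ?thesis using is_square_mult_nonsquares[of x y] by (simp add: quad_char_def)
  qed (auto simp: quad_char_def)
qed

lemma quad_char_mult_self: "(x::'a) \<noteq> 0 \<Longrightarrow> quad_char x * quad_char x = 1"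
  using quad_char_mult[of x x] by simp

lemma quad_char_power_odd:
  assumes "odd k" "(r::'a) \<noteq> 0" shows "quad_char r ^ k = quad_char r"
proof -
  obtain j where "k = 2 * j + 1" using \<open>odd k\<close> by (metis oddE)
  then have "quad_char r ^ k = (quad_char r * quad_char r) ^ j * quad_char r"
    by (simp add: power_mult power2_eq_square)
  then show ?thesis using quad_char_mult_self[OF assms(2)] by simp
qed

lemma sum_quad_char_affine:
  assumes "c \<noteq> 0" shows "(\<Sum>u\<in>UNIV. quad_char (c * u + (d::'a))) = 0"
proof -
  have "(\<Sum>u\<in>UNIV. quad_char (c * u + d)) = (\<Sum>v\<in>(UNIV::'a set). quad_char v)"
    by (rule sum.reindex_bij_witness[of _ "\<lambda>v. (v - d) / c" "\<lambda>u. c * u + d"]) (use assms in auto)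
  then show ?thesis using sum_quad_char by simp
qed

lemma sum_quad_char_mult_affine:
  fixes \<alpha> \<beta> :: 'a
  assumes "\<beta> \<noteq> 0"
  shows "(\<Sum>u\<in>-{0}. quad_char u * quad_char (\<alpha> * u + \<beta>)) = - quad_char \<alpha>"
proof -
  have "(\<Sum>u\<in>-{0}. quad_char u * quad_char (\<alpha> * u + \<beta>)) = (\<Sum>u\<in>-{0}. quad_char (\<alpha> + \<beta> * inverse u))"
  proof (rule sum.cong[OF refl])
    fix u :: 'a assume "u \<in> -{0}"
    then have u: "u \<noteq> 0" by simp
    then have "\<alpha> * u + \<beta> = u * (\<alpha> + \<beta> * inverse u)" by (simp add: field_simps)
    then show "quad_char u * quad_char (\<alpha> * u + \<beta>) = quad_char (\<alpha> + \<beta> * inverse u)"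
      using quad_char_mult_self[OF u] by (simp add: quad_char_mult mult.assoc[symmetric])
  qed
  also have "\<dots> = (\<Sum>w\<in>-{0}. quad_char (\<alpha> + \<beta> * w))"
    by (rule sum.reindex_bij_witness[of _ inverse inverse]) auto
  also have "\<dots> = (\<Sum>w\<in>UNIV. quad_char (\<beta> * w + \<alpha>)) - quad_char \<alpha>"
    using sum_UNIV_remove_0[of "\<lambda>w. quad_char (\<alpha> + \<beta> * w)"] by (simp add: add.commute)
  also have "(\<Sum>w\<in>UNIV. quad_char (\<beta> * w + \<alpha>)) = 0"
    using sum_quad_char_affine[OF assms] .
  finally show ?thesis by simp
qed

lemma sum_quad_char_quadratic:
  fixes \<alpha> \<beta> :: 'a
  assumes a: "\<alpha> \<noteq> 0"
  shows "(\<Sum>x\<in>UNIV. quad_char (\<alpha> * (x * x) + \<beta>)) =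
           (if \<beta> = 0 then (of_nat CARD('a) - 1) * quad_char \<alpha> else - quad_char \<alpha>)"
proof -
  have "(\<Sum>x\<in>UNIV. quad_char (\<alpha> * (x * x) + \<beta>))
      = (\<Sum>u\<in>UNIV. (1 + quad_char u) * quad_char (\<alpha> * u + \<beta>))"
    by (rule sum_squares_quad_char)
  also have "\<dots> = (\<Sum>u\<in>UNIV. quad_char (\<alpha> * u + \<beta>)) + (\<Sum>u\<in>UNIV. quad_char u * quad_char (\<alpha> * u + \<beta>))"
    by (simp add: distrib_right sum.distrib)
  also have "(\<Sum>u\<in>UNIV. quad_char (\<alpha> * u + \<beta>)) = 0" using sum_quad_char_affine a by blast
  finally have eq: "(\<Sum>x\<in>UNIV. quad_char (\<alpha> * (x * x) + \<beta>))
      = (\<Sum>u\<in>-{0}. quad_char u * quad_char (\<alpha> * u + \<beta>))"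
    by (simp add: sum_UNIV_remove_0[of "\<lambda>u. quad_char u * quad_char (\<alpha> * u + \<beta>)"])
  show ?thesis
  proof (cases "\<beta> = 0")
    case True
    have "(\<Sum>u\<in>-{0}. quad_char u * quad_char (\<alpha> * u + \<beta>)) = (\<Sum>u\<in>-{0::'a}. quad_char \<alpha>)"
      using True by (intro sum.cong) (auto simp: quad_char_mult quad_char_mult_self)
    also have "\<dots> = (of_nat CARD('a) - 1) * quad_char \<alpha>"
      by (simp add: Compl_eq_Diff_UNIV card_Diff_singleton of_nat_diff)
    finally show ?thesis using eq True by simp
  qed (use eq sum_quad_char_mult_affine in simp)
qed

lemma sum_count_square_roots_quadratic:
  fixes a b y :: 'a
  assumes "b \<noteq> 0"
  shows "(\<Sum>x\<in>UNIV. 1 + quad_char (y * y - 4 * (x * x + a) * b))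
       = (of_nat CARD('a) - quad_char (- 4 * b)) + (if y * y = 4 * a * b then of_nat CARD('a) * quad_char (- 4 * b) else 0)"
proof -
  have "- 4 * b \<noteq> 0" using assms four_neq_zero by simp
  have e: "y * y - 4 * (x * x + a) * b = (- 4 * b) * (x * x) + (y * y - 4 * a * b)" for x
    by (simp add: algebra_simps)
  have "(\<Sum>x\<in>UNIV. 1 + quad_char (y * y - 4 * (x * x + a) * b))
      = of_nat CARD('a) + (\<Sum>x\<in>UNIV. quad_char ((- 4 * b) * (x * x) + (y * y - 4 * a * b)))"
    unfolding e by (simp add: sum.distrib)
  also have "\<dots> = (of_nat CARD('a) - quad_char (- 4 * b))
      + (if y * y = 4 * a * b then of_nat CARD('a) * quad_char (- 4 * b) else 0)"
    unfolding sum_quad_char_quadratic[OF \<open>- 4 * b \<noteq> 0\<close>] by (auto simp: algebra_simps)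
  finally show ?thesis .
qed


lemma kloosterman_eq_iff:
  fixes \<alpha> b r y :: 'a
  assumes "\<alpha> \<noteq> 0" "r \<noteq> 0"
  shows "\<alpha> * r + b / r = y \<longleftrightarrow> (2 * \<alpha> * r - y) * (2 * \<alpha> * r - y) = y * y - 4 * \<alpha> * b"
proof -
  have "\<alpha> * r + b / r = (\<alpha> * r * r + b) / r" using assms(2) by (simp add: field_simps)
  then have "\<alpha> * r + b / r = y \<longleftrightarrow> \<alpha> * r * r + b = y * r" using assms(2) by (simp add: divide_eq_eq)
  also have "\<dots> \<longleftrightarrow> 4 * \<alpha> * (\<alpha> * r * r + b - y * r) = 0"
    using assms(1) four_neq_zero by simp
  also have "4 * \<alpha> * (\<alpha> * r * r + b - y * r)
      = (2 * \<alpha> * r - y) * (2 * \<alpha> * r - y) - (y * y - 4 * \<alpha> * b)"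
    by (simp add: algebra_simps)
  finally show ?thesis by simp
qed

lemma card_kloosterman_fibre:
  fixes \<alpha> b y :: 'a
  assumes b: "b \<noteq> 0" and a: "\<alpha> \<noteq> 0"
  shows "card {r\<in>-{0}. \<alpha> * r + b / r = y} = card {w. w * w = y * y - 4 * \<alpha> * b}"
proof (rule bij_betw_same_card[of "\<lambda>r. 2 * \<alpha> * r - y"],
    rule bij_betw_byWitness[of _ "\<lambda>w. (w + y) / (2 * \<alpha>)"])
  show "\<forall>r\<in>{r\<in>-{0}. \<alpha> * r + b / r = y}. (2 * \<alpha> * r - y + y) / (2 * \<alpha>) = r"
    using a two_neq_zero by auto
  show "\<forall>w\<in>{w. w * w = y * y - 4 * \<alpha> * b}. 2 * \<alpha> * ((w + y) / (2 * \<alpha>)) - y = w"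
    using a two_neq_zero by auto
  show "(\<lambda>r. 2 * \<alpha> * r - y) ` {r\<in>-{0}. \<alpha> * r + b / r = y} \<subseteq> {w. w * w = y * y - 4 * \<alpha> * b}"
    using kloosterman_eq_iff[OF a] by auto
  show "(\<lambda>w. (w + y) / (2 * \<alpha>)) ` {w. w * w = y * y - 4 * \<alpha> * b} \<subseteq> {r\<in>-{0}. \<alpha> * r + b / r = y}"
  proof clarify
    fix w assume w: "w * w = y * y - 4 * \<alpha> * b"
    have "w + y \<noteq> 0"
    proof
      assume "w + y = 0"
      then have "w * w = y * y" by (simp add: eq_neg_iff_add_eq_0[symmetric])
      then show False using w a b four_neq_zero by simp
    qed
    then have "(w + y) / (2 * \<alpha>) \<noteq> 0" using a two_neq_zero by simp
    moreover have "2 * \<alpha> * ((w + y) / (2 * \<alpha>)) - y = w" using a two_neq_zero by simp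
    ultimately show "(w + y) / (2 * \<alpha>) \<in> -{0} \<and> \<alpha> * ((w + y) / (2 * \<alpha>)) + b / ((w + y) / (2 * \<alpha>)) = y"
      using kloosterman_eq_iff[OF a, of "(w + y) / (2 * \<alpha>)" b y] w by simp
  qed
qed

end

section \<open>Gauss, Kloosterman and Sali\<acute>e sums\<close>

locale odd_additive_character = additive_character chi for chi :: "'a::{field,finite} \<Rightarrow> complex" +
  assumes two_neq_zero: "(2::'a) \<noteq> 0"
begin

lemmas four_neq_zero = four_neq_zero[OF two_neq_zero]

definition gauss_sum :: "'a \<Rightarrow> complex" where "gauss_sum r = (\<Sum>x\<in>UNIV. chi (r * (x * x)))"

lemma gauss_sum_quad_char: "r \<noteq> 0 \<Longrightarrow> gauss_sum r = (\<Sum>y\<in>UNIV. quad_char y * chi (r * y))"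
proof -
  assume r: "r \<noteq> 0"
  have "gauss_sum r = (\<Sum>y\<in>UNIV. (1 + quad_char y) * chi (r * y))"
    unfolding gauss_sum_def by (rule sum_squares_quad_char[OF two_neq_zero])
  also have "\<dots> = (\<Sum>y\<in>UNIV. chi (r * y)) + (\<Sum>y\<in>UNIV. quad_char y * chi (r * y))"
    by (simp add: distrib_right sum.distrib)
  also have "(\<Sum>y\<in>UNIV. chi (r * y)) = 0" using sum_chi_mult r by simp
  finally show ?thesis by simp
qed

lemma gauss_sum_eq_quad_char_mult: "r \<noteq> 0 \<Longrightarrow> gauss_sum r = quad_char r * gauss_sum 1"
proof -
  assume r: "r \<noteq> 0"
  have "gauss_sum r = (\<Sum>y\<in>UNIV. quad_char y * chi (r * y))" using gauss_sum_quad_char r by simp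
  also have "\<dots> = (\<Sum>v\<in>UNIV. quad_char (v / r) * chi v)"
    by (rule sum.reindex_bij_witness[of _ "\<lambda>v. v / r" "\<lambda>y. r * y"]) (use r in auto)
  also have "\<dots> = (\<Sum>v\<in>UNIV. quad_char r * (quad_char v * chi v))"
    by (rule sum.cong) (auto simp: divide_inverse quad_char_mult[OF two_neq_zero] quad_char_inverse)
  also have "\<dots> = quad_char r * gauss_sum 1"
    using gauss_sum_quad_char[of 1] by (simp add: sum_distrib_left)
  finally show ?thesis .
qed

lemma gauss_sum_mult_cnj: "r \<noteq> 0 \<Longrightarrow> gauss_sum r * cnj (gauss_sum r) = of_nat CARD('a)"
proof -
  assume r: "r \<noteq> 0"
  have "gauss_sum r * cnj (gauss_sum r) = (\<Sum>x\<in>UNIV. \<Sum>y\<in>UNIV. chi (r * (x * x)) * cnj (chi (r * (y * y))))"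
    unfolding gauss_sum_def cnj_sum sum_product by (rule refl)
  also have "\<dots> = (\<Sum>(x, y)\<in>UNIV. chi (r * ((x - y) * (x + y))))"
    unfolding sum.cartesian_product[symmetric] UNIV_Times_UNIV[symmetric]
    by (intro sum.cong refl) (simp add: chi_diff[symmetric] algebra_simps)
  also have "\<dots> = (\<Sum>(u, v)\<in>UNIV. chi (r * (u * v)))"
    by (rule sum.reindex_bij_witness[of _ "\<lambda>(u, v). ((u + v) / 2, (v - u) / 2)"
          "\<lambda>(x, y). (x - y, x + y)"]) (auto simp: field_simps two_neq_zero four_neq_zero)
  also have "\<dots> = (\<Sum>u\<in>UNIV. \<Sum>v\<in>UNIV. chi ((r * u) * v))"
    unfolding UNIV_Times_UNIV[symmetric] sum.cartesian_product[symmetric] by (simp add: mult.assoc)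
  also have "\<dots> = (\<Sum>u\<in>(UNIV::'a set). if u = 0 then of_nat CARD('a) else 0)"
    by (rule sum.cong) (use r sum_chi_mult in auto)
  also have "\<dots> = of_nat CARD('a)" by simp
  finally show ?thesis .
qed

lemma norm_gauss_sum: "r \<noteq> 0 \<Longrightarrow> norm (gauss_sum r) = sqrt (real CARD('a))"
proof -
  assume r: "r \<noteq> 0"
  have "complex_of_real ((norm (gauss_sum r))\<^sup>2) = of_nat CARD('a)"
    using gauss_sum_mult_cnj[OF r] by (simp only: complex_norm_square)
  then have "(norm (gauss_sum r))\<^sup>2 = real CARD('a)"
    by (metis of_real_eq_iff of_real_of_nat_eq)
  then show ?thesis by (simp add: real_sqrt_unique)
qed

lemma sum_chi_quadratic:
  assumes r: "r \<noteq> 0"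
  shows "(\<Sum>x\<in>UNIV. chi (r * (x * x) + b * x)) = gauss_sum r * chi (- (b * b) / (4 * r))"
proof -
  have four: "(4::'a) \<noteq> 0" by (rule four_neq_zero)
  have "(\<Sum>x\<in>UNIV. chi (r * (x * x) + b * x)) = (\<Sum>y\<in>UNIV. chi (r * ((y - b / (2*r)) * (y - b / (2*r))) + b * (y - b / (2*r))))"
    by (rule sum.reindex_bij_witness[of _ "\<lambda>y. y - b / (2*r)" "\<lambda>x. x + b / (2*r)"]) auto
  also have "\<dots> = (\<Sum>y\<in>UNIV. chi (r * (y * y) + (- (b * b) / (4 * r))))"
  proof (rule sum.cong[OF refl])
    fix y
    define c where "c = b / (2 * r)"
    have bc: "b = 2 * r * c" unfolding c_def using r two_neq_zero by simp
    have e1: "r * ((y - c) * (y - c)) + b * (y - c) = r * (y * y) + (- (r * (c * c)))"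
      unfolding bc by (simp add: algebra_simps)
    have e2: "- (b * b) / (4 * r) = - (r * (c * c))"
      unfolding bc using r four_neq_zero by (simp add: field_simps)
    show "chi (r * ((y - b / (2*r)) * (y - b / (2*r))) + b * (y - b / (2*r))) = chi (r * (y * y) + (- (b * b) / (4 * r)))"
      using e1 e2 unfolding c_def by simp
  qed
  also have "\<dots> = gauss_sum r * chi (- (b * b) / (4 * r))"
    unfolding gauss_sum_def sum_distrib_right chi_add by (rule refl)
  finally show ?thesis .
qed

lemma kloosterman_sum_eq:
  fixes \<alpha> b :: 'a
  assumes b: "b \<noteq> 0"
  shows "(\<Sum>r\<in>-{0}. chi (\<alpha> * r + b / r)) = (\<Sum>y\<in>UNIV. chi y * (1 + quad_char (y * y - 4 * \<alpha> * b)))"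
proof (cases "\<alpha> = 0")
  case True
  have "(\<Sum>r\<in>-{0}. chi (\<alpha> * r + b / r)) = (\<Sum>r\<in>-{0}. chi (b / r))" using True by simp
  also have "\<dots> = (\<Sum>v\<in>-{0}. chi v)"
    by (rule sum.reindex_bij_witness[of _ "\<lambda>v. b / v" "\<lambda>r. b / r"]) (use b in auto)
  also have "\<dots> = -1" by (rule sum_chi_nonzero)
  finally have l: "(\<Sum>r\<in>-{0}. chi (\<alpha> * r + b / r)) = -1" .
  have "(\<Sum>y\<in>UNIV. chi y * (1 + quad_char (y * y - 4 * \<alpha> * b))) = (\<Sum>y\<in>UNIV. chi y) + (\<Sum>y\<in>UNIV. chi y * quad_char (y * y))"
    using True by (simp add: distrib_left sum.distrib)
  also have "(\<Sum>y\<in>UNIV. chi y * quad_char (y * y)) = (\<Sum>y\<in>-{0}. chi y)"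
    by (simp add: sum_UNIV_remove_0[of "\<lambda>y. chi y * quad_char (y * y)"])
  finally show ?thesis using l sum_chi sum_chi_nonzero by simp
next
  case False
  have "(\<Sum>r\<in>-{0}. chi (\<alpha> * r + b / r)) = (\<Sum>y\<in>UNIV. \<Sum>r\<in>{r\<in>-{0}. \<alpha> * r + b / r = y}. chi (\<alpha> * r + b / r))"
    by (rule sum.group[symmetric]) auto
  also have "\<dots> = (\<Sum>y\<in>UNIV. chi y * (1 + quad_char (y * y - 4 * \<alpha> * b)))"
  proof (rule sum.cong[OF refl])
    fix y
    have "(\<Sum>r\<in>{r\<in>-{0}. \<alpha> * r + b / r = y}. chi (\<alpha> * r + b / r)) = (\<Sum>r\<in>{r\<in>-{0}. \<alpha> * r + b / r = y}. chi y)"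
      by (rule sum.cong) auto
    also have "\<dots> = of_nat (card {r\<in>-{0}. \<alpha> * r + b / r = y}) * chi y" by simp
    also have "card {r\<in>-{0}. \<alpha> * r + b / r = y} = card {w. w * w = y * y - 4 * \<alpha> * b}"
      using card_kloosterman_fibre[OF two_neq_zero b False] .
    finally show "(\<Sum>r\<in>{r\<in>-{0}. \<alpha> * r + b / r = y}. chi (\<alpha> * r + b / r)) = chi y * (1 + quad_char (y * y - 4 * \<alpha> * b))"
      by (simp add: of_nat_card_square_roots[OF two_neq_zero] mult.commute)
  qed
  finally show ?thesis .
qed

text \<open>Multiplying the Sali\<acute>e sum by \<open>gauss_sum 1\<close> turns it into a double sum over \<open>x\<close>
  and \<open>r\<close>; the inner Kloosterman sums are then evaluated by counting square roots.\<close>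

lemma gauss_sum_mult_salie_sum:
  fixes a b :: 'a
  assumes b: "b \<noteq> 0"
  shows "gauss_sum 1 * (\<Sum>r\<in>UNIV. quad_char r * chi (a * r + b / r))
       = of_nat CARD('a) * quad_char (- 4 * b) * (\<Sum>y\<in>{y. y * y = 4 * a * b}. chi y)"
proof -
  define c where "c = quad_char (- 4 * b)"
  define T where "T = {y::'a. y * y = 4 * a * b}"
  have "gauss_sum 1 * (\<Sum>r\<in>UNIV. quad_char r * chi (a * r + b / r))
      = (\<Sum>r\<in>-{0}. gauss_sum 1 * (quad_char r * chi (a * r + b / r)))"
    using sum_UNIV_remove_0[of "\<lambda>r. gauss_sum 1 * (quad_char r * chi (a * r + b / r))"]
    by (simp add: sum_distrib_left)
  also have "\<dots> = (\<Sum>r\<in>-{0}. gauss_sum r * chi (a * r + b / r))"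
  proof (intro sum.cong refl)
    fix r :: 'a assume "r \<in> -{0}"
    then show "gauss_sum 1 * (quad_char r * chi (a * r + b / r)) = gauss_sum r * chi (a * r + b / r)"
      using gauss_sum_eq_quad_char_mult[of r] by simp
  qed
  also have "\<dots> = (\<Sum>r\<in>-{0}. \<Sum>x\<in>UNIV. chi ((x * x + a) * r + b / r))"
    unfolding gauss_sum_def sum_distrib_right
    by (intro sum.cong refl) (simp add: chi_add[symmetric] algebra_simps)
  also have "\<dots> = (\<Sum>x\<in>UNIV. \<Sum>y\<in>UNIV. chi y * (1 + quad_char (y * y - 4 * (x * x + a) * b)))"
    by (subst sum.swap) (intro sum.cong refl kloosterman_sum_eq b)
  also have "\<dots> = (\<Sum>y\<in>UNIV. chi y * (\<Sum>x\<in>UNIV. 1 + quad_char (y * y - 4 * (x * x + a) * b)))"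
    by (subst sum.swap) (simp add: sum_distrib_left)
  also have "\<dots> = (\<Sum>y\<in>UNIV. (of_nat CARD('a) - c) * chi y + (if y \<in> T then of_nat CARD('a) * c * chi y else 0))"
    unfolding sum_count_square_roots_quadratic[OF two_neq_zero b] c_def T_def
    by (intro sum.cong refl) (simp add: algebra_simps)
  also have "\<dots> = of_nat CARD('a) * c * (\<Sum>y\<in>T. chi y)"
    by (simp add: sum.distrib sum_distrib_left[symmetric] sum.If_cases sum_chi)
  finally show ?thesis unfolding T_def c_def .
qed

lemma norm_salie_sum_le:
  fixes a b :: 'a
  shows "norm (\<Sum>r\<in>UNIV. quad_char r * chi (a * r + b / r)) \<le> 2 * sqrt (real CARD('a))"
proof (cases "b = 0")
  case True
  show ?thesis
  proof (cases "a = 0")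
    case True
    then show ?thesis using \<open>b = 0\<close> sum_quad_char[OF two_neq_zero] by simp
  next
    case False
    have "(\<Sum>r\<in>UNIV. quad_char r * chi (a * r + b / r)) = gauss_sum a"
      using gauss_sum_quad_char[OF False] \<open>b = 0\<close> by simp
    then show ?thesis using norm_gauss_sum[OF False] by simp
  qed
next
  case False
  define S where "S = (\<Sum>r\<in>UNIV. quad_char r * chi (a * r + b / r))"
  define T where "T = {y::'a. y * y = 4 * a * b}"
  have "norm (\<Sum>y\<in>T. chi y) \<le> real (card T)"
    using norm_sum[of chi T] by (simp add: norm_chi)
  also have "\<dots> \<le> 2" unfolding T_def using card_square_roots_le_2[OF two_neq_zero] by simp
  finally have "norm (gauss_sum 1 * S) \<le> real CARD('a) * 1 * 2"
    unfolding S_def gauss_sum_mult_salie_sum[OF False] T_def[symmetric] norm_mult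
    by (intro mult_mono norm_quad_char_le) auto
  then have "sqrt (real CARD('a)) * norm S \<le> 2 * real CARD('a)"
    by (simp add: norm_mult norm_gauss_sum)
  also have "\<dots> = sqrt (real CARD('a)) * (2 * sqrt (real CARD('a)))" by simp
  finally show ?thesis unfolding S_def using mult_le_cancel_left_pos[of "sqrt (real CARD('a))"] by simp
qed

end

section \<open>Fourier analysis on \<open>\<bbbF>\<^sub>q\<^sup>d\<close>\<close>

definition vdot :: "('a::comm_ring_1) ^ 'n \<Rightarrow> 'a ^ 'n \<Rightarrow> 'a" where
  "vdot m z = (\<Sum>i\<in>UNIV. m $ i * z $ i)"

lemma vdot_diff: "vdot m (x - y) = vdot m x - vdot m y"
  by (simp add: vdot_def algebra_simps sum_subtractf)

lemma ffnorm_eq_sum_mult: "ffnorm m = (\<Sum>i\<in>UNIV. m $ i * m $ i)"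
  by (simp add: ffnorm_def power2_eq_square)

lemma sum_vec_prod:
  fixes f :: "'n::finite \<Rightarrow> 'a::finite \<Rightarrow> 'c::comm_ring_1"
  shows "(\<Sum>m\<in>(UNIV::('a^'n) set). \<Prod>i\<in>UNIV. f i (m $ i)) = (\<Prod>i\<in>UNIV. \<Sum>a\<in>UNIV. f i a)"
proof -
  have "(\<Prod>i\<in>UNIV. \<Sum>a\<in>UNIV. f i a) = (\<Sum>g\<in>PiE UNIV (\<lambda>_. UNIV). \<Prod>i\<in>UNIV. f i (g i))"
    by (rule prod_sum_PiE) auto
  also have "PiE UNIV (\<lambda>_::'n. UNIV::'a set) = UNIV" by (rule PiE_UNIV)
  also have "(\<Sum>g\<in>UNIV. \<Prod>i\<in>UNIV. f i (g i)) = (\<Sum>m\<in>(UNIV::('a^'n) set). \<Prod>i\<in>UNIV. f i (m $ i))"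
    by (rule sum.reindex_bij_witness[of _ vec_nth vec_lambda]) auto
  finally show ?thesis by simp
qed

lemma sum_spheres: "(\<Sum>u\<in>UNIV. \<Sum>m\<in>{m. ffnorm m = u}. f m) = (\<Sum>m\<in>(UNIV::('a::{comm_ring_1,finite}^'n) set). f m)"
  using sum.group[of UNIV UNIV ffnorm f] by simp

context additive_character
begin

definition fourier :: "('a ^ 'n) set \<Rightarrow> 'a ^ 'n \<Rightarrow> complex" where
  "fourier A m = (\<Sum>x\<in>A. chi (vdot m x))"

lemma sum_chi_vdot:
  fixes z :: "'a ^ 'n"
  shows "(\<Sum>m\<in>UNIV. chi (vdot m z)) = (if z = 0 then of_nat CARD('a) ^ CARD('n) else 0)"
proof -
  have "(\<Sum>m\<in>UNIV. chi (vdot m z)) = (\<Prod>i\<in>UNIV. \<Sum>a\<in>UNIV. chi (z $ i * a))"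
    unfolding vdot_def chi_sum by (subst sum_vec_prod[symmetric]) (simp add: mult.commute)
  also have "\<dots> = (\<Prod>i\<in>UNIV. if z $ i = 0 then of_nat CARD('a) else 0)"
    by (simp add: sum_chi_mult)
  also have "\<dots> = (if z = 0 then of_nat CARD('a) ^ CARD('n) else 0)"
  proof (cases "z = 0")
    case False
    then obtain i where "z $ i \<noteq> 0" by (metis vec_eq_iff zero_index)
    then show ?thesis using False by (intro trans[OF prod_zero]) auto
  qed simp
  finally show ?thesis .
qed

lemma fourier_mult_cnj: "fourier A m * cnj (fourier A m) = (\<Sum>x\<in>A. \<Sum>y\<in>A. chi (vdot m (x - y)))"
  unfolding fourier_def cnj_sum sum_product by (simp add: vdot_diff chi_diff)

lemma parseval:
  fixes A :: "'a \<Rightarrow> complex"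
  shows "(\<Sum>r\<in>UNIV. (norm (\<Sum>u\<in>UNIV. chi (r * u) * A u))\<^sup>2) = real CARD('a) * (\<Sum>u\<in>UNIV. (norm (A u))\<^sup>2)"
proof -
  have "complex_of_real (\<Sum>r\<in>UNIV. (norm (\<Sum>u\<in>UNIV. chi (r * u) * A u))\<^sup>2)
      = (\<Sum>r\<in>UNIV. \<Sum>u\<in>UNIV. \<Sum>v\<in>UNIV. A u * cnj (A v) * chi (r * (u - v)))"
    unfolding of_real_sum complex_norm_square cnj_sum sum_product complex_cnj_mult
    by (intro sum.cong refl) (simp add: right_diff_distrib chi_diff mult_ac)
  also have "\<dots> = (\<Sum>u\<in>UNIV. \<Sum>r\<in>UNIV. \<Sum>v\<in>UNIV. A u * cnj (A v) * chi (r * (u - v)))"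
    by (rule sum.swap)
  also have "\<dots> = (\<Sum>u\<in>UNIV. \<Sum>v\<in>UNIV. \<Sum>r\<in>UNIV. A u * cnj (A v) * chi ((u - v) * r))"
    by (intro sum.cong refl sum.swap[THEN trans]) (simp add: mult.commute)
  also have "\<dots> = (\<Sum>u\<in>UNIV. \<Sum>v\<in>UNIV. A u * cnj (A v) * (\<Sum>r\<in>UNIV. chi ((u - v) * r)))"
    by (simp add: sum_distrib_left)
  also have "\<dots> = (\<Sum>u\<in>UNIV. of_nat CARD('a) * (A u * cnj (A u)))"
    by (intro sum.cong refl) (simp add: sum_chi_mult if_distrib sum.delta cong: if_cong)
  also have "\<dots> = complex_of_real (real CARD('a) * (\<Sum>u\<in>UNIV. (norm (A u))\<^sup>2))"
    unfolding of_real_mult of_real_sum complex_norm_square by (simp add: sum_distrib_left)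
  finally show ?thesis by (simp only: of_real_eq_iff)
qed

lemma plancherel:
  fixes A :: "('a ^ 'n) set"
  shows "(\<Sum>m\<in>UNIV. (norm (fourier A m))\<^sup>2) = real CARD('a) ^ CARD('n) * real (card A)"
proof -
  have "complex_of_real (\<Sum>m\<in>UNIV. (norm (fourier A m))\<^sup>2)
      = (\<Sum>m\<in>UNIV. \<Sum>x\<in>A. \<Sum>y\<in>A. chi (vdot m (x - y)))"
    unfolding of_real_sum complex_norm_square fourier_mult_cnj ..
  also have "\<dots> = (\<Sum>x\<in>A. \<Sum>m\<in>UNIV. \<Sum>y\<in>A. chi (vdot m (x - y)))"
    by (rule sum.swap)
  also have "\<dots> = (\<Sum>x\<in>A. \<Sum>y\<in>A. \<Sum>m\<in>UNIV. chi (vdot m (x - y)))"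
    by (intro sum.cong refl sum.swap)
  also have "\<dots> = (\<Sum>x\<in>A. of_nat CARD('a) ^ CARD('n))"
    by (intro sum.cong refl) (simp add: sum_chi_vdot if_distrib sum.delta cong: if_cong)
  also have "\<dots> = complex_of_real (real CARD('a) ^ CARD('n) * real (card A))"
    by (simp add: mult.commute)
  finally show ?thesis by (simp only: of_real_eq_iff)
qed

lemma sphere_fourier_mass_le_plancherel:
  fixes A :: "('a ^ 'n) set"
  shows "(\<Sum>m\<in>{m. ffnorm m = u}. (norm (fourier A m))\<^sup>2) \<le> real CARD('a) ^ CARD('n) * real (card A)"
  using sum_mono2[of UNIV "{m. ffnorm m = u}" "\<lambda>m. (norm (fourier A m))\<^sup>2"] plancherel[of A]
  by simp


lemma sum_norm_fourier_sq_le: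
  fixes S A :: "('a ^ 'n) set"
  assumes bound: "\<And>z. norm (\<Sum>m\<in>S. chi (vdot m z)) \<le> (if z = 0 then C else 0) + B"
  shows "(\<Sum>m\<in>S. (norm (fourier A m))\<^sup>2) \<le> C * real (card A) + B * real (card A) ^ 2"
proof -
  have "complex_of_real (\<Sum>m\<in>S. (norm (fourier A m))\<^sup>2) = (\<Sum>m\<in>S. \<Sum>x\<in>A. \<Sum>y\<in>A. chi (vdot m (x - y)))"
    unfolding of_real_sum complex_norm_square fourier_mult_cnj ..
  also have "\<dots> = (\<Sum>x\<in>A. \<Sum>y\<in>A. \<Sum>m\<in>S. chi (vdot m (x - y)))"
    by (subst sum.swap) (intro sum.cong refl sum.swap)
  finally have eq: "complex_of_real (\<Sum>m\<in>S. (norm (fourier A m))\<^sup>2)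
      = (\<Sum>x\<in>A. \<Sum>y\<in>A. \<Sum>m\<in>S. chi (vdot m (x - y)))" .
  have "0 \<le> (\<Sum>m\<in>S. (norm (fourier A m))\<^sup>2)" by (simp add: sum_nonneg)
  then have "(\<Sum>m\<in>S. (norm (fourier A m))\<^sup>2) = norm (complex_of_real (\<Sum>m\<in>S. (norm (fourier A m))\<^sup>2))"
    by (simp only: norm_of_real abs_of_nonneg)
  also have "\<dots> = norm (\<Sum>x\<in>A. \<Sum>y\<in>A. \<Sum>m\<in>S. chi (vdot m (x - y)))"
    by (simp only: eq)
  also have "\<dots> \<le> (\<Sum>x\<in>A. \<Sum>y\<in>A. (if x - y = 0 then C else 0) + B)"
    by (rule order.trans[OF norm_sum sum_mono[OF order.trans[OF norm_sum sum_mono[OF bound]]]])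
  also have "\<dots> = (\<Sum>x\<in>A. C + real (card A) * B)"
    by (intro sum.cong refl) (simp add: sum.distrib sum.delta')
  also have "\<dots> = C * real (card A) + B * real (card A) ^ 2"
    by (simp add: power2_eq_square algebra_simps)
  finally show ?thesis .
qed

lemma of_nat_mult_sum_sphere:
  "of_nat CARD('a) * (\<Sum>m\<in>{m. ffnorm m = u}. f m)
     = (\<Sum>s\<in>UNIV. \<Sum>m\<in>(UNIV::('a^'n) set). chi (s * (ffnorm m - u)) * f m)"
proof -
  have "(\<Sum>s\<in>UNIV. \<Sum>m\<in>(UNIV::('a^'n) set). chi (s * (ffnorm m - u)) * f m)
      = (\<Sum>m\<in>UNIV. \<Sum>s\<in>UNIV. chi ((ffnorm m - u) * s) * f m)"
    by (subst sum.swap) (simp add: mult.commute)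
  also have "\<dots> = (\<Sum>m\<in>UNIV. (\<Sum>s\<in>UNIV. chi ((ffnorm m - u) * s)) * f m)"
    by (simp add: sum_distrib_right)
  also have "\<dots> = (\<Sum>m\<in>UNIV. if ffnorm m = u then of_nat CARD('a) * f m else 0)"
    by (intro sum.cong refl) (simp add: sum_chi_mult)
  also have "\<dots> = of_nat CARD('a) * (\<Sum>m\<in>{m. ffnorm m = u}. f m)"
    by (simp add: sum.If_cases sum_distrib_left)
  finally show ?thesis ..
qed

end

context odd_additive_character
begin

lemma sum_chi_quadratic_vec:
  fixes z :: "'a ^ 'n"
  assumes r: "r \<noteq> 0"
  shows "(\<Sum>m\<in>UNIV. chi (r * ffnorm m + vdot m z)) = gauss_sum r ^ CARD('n) * chi (- ffnorm z / (4 * r))"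
proof -
  have e: "r * ffnorm m + vdot m z = (\<Sum>i\<in>UNIV. r * (m $ i * m $ i) + z $ i * m $ i)" for m :: "'a^'n"
    by (simp add: ffnorm_eq_sum_mult vdot_def sum_distrib_left sum.distrib mult.commute)
  have "(\<Sum>m\<in>UNIV. chi (r * ffnorm m + vdot m z)) = (\<Prod>i\<in>UNIV. \<Sum>a\<in>UNIV. chi (r * (a * a) + z $ i * a))"
    unfolding e chi_sum by (rule sum_vec_prod)
  also have "\<dots> = (\<Prod>i\<in>UNIV. gauss_sum r * chi (- (z $ i * z $ i) / (4 * r)))"
    by (intro prod.cong refl sum_chi_quadratic r)
  also have "\<dots> = gauss_sum r ^ CARD('n) * chi (\<Sum>i\<in>UNIV. - (z $ i * z $ i) / (4 * r))"
    by (simp add: prod.distrib chi_sum)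
  also have "(\<Sum>i\<in>UNIV. - (z $ i * z $ i) / (4 * r)) = - ffnorm z / (4 * r)"
    by (simp add: ffnorm_eq_sum_mult sum_divide_distrib[symmetric] sum_negf)
  finally show ?thesis .
qed

text \<open>Detecting the sphere by additive characters and evaluating the resulting Gaussian sums
  over \<open>m\<close> leaves, in odd dimension, a Sali\<acute>e sum in the dilation parameter.\<close>

lemma sphere_fourier_eq:
  fixes z :: "'a ^ 'n"
  assumes d: "odd CARD('n)"
  shows "of_nat CARD('a) * (\<Sum>m\<in>{m. ffnorm m = u}. chi (vdot m z))
       = (if z = 0 then of_nat CARD('a) ^ CARD('n) else 0)
         + gauss_sum 1 ^ CARD('n) * (\<Sum>r\<in>UNIV. quad_char r * chi ((- u) * r + (- ffnorm z / 4) / r))"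
proof -
  define K where "K s = (\<Sum>m\<in>(UNIV::('a^'n) set). chi (s * ffnorm m + vdot m z)) * chi (- (u * s))" for s
  have "of_nat CARD('a) * (\<Sum>m\<in>{m. ffnorm m = u}. chi (vdot m z)) = (\<Sum>s\<in>UNIV. K s)"
    unfolding of_nat_mult_sum_sphere K_def sum_distrib_right
    by (intro sum.cong refl) (simp add: chi_add[symmetric] algebra_simps)
  also have "\<dots> = K 0 + (\<Sum>s\<in>-{0}. K s)" by (rule sum_UNIV_remove_0)
  also have "K 0 = (if z = 0 then of_nat CARD('a) ^ CARD('n) else 0)"
    by (simp add: K_def sum_chi_vdot)
  also have "(\<Sum>s\<in>-{0}. K s)
      = (\<Sum>s\<in>-{0}. gauss_sum 1 ^ CARD('n) * (quad_char s * chi ((- u) * s + (- ffnorm z / 4) / s)))"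
  proof (intro sum.cong refl)
    fix s :: 'a assume "s \<in> -{0}"
    then have s: "s \<noteq> 0" by simp
    have "gauss_sum s ^ CARD('n) = quad_char s * gauss_sum 1 ^ CARD('n)"
      using gauss_sum_eq_quad_char_mult[OF s] quad_char_power_odd[OF two_neq_zero d s]
      by (simp add: power_mult_distrib)
    moreover have "- ffnorm z / (4 * s) + - (u * s) = (- u) * s + (- ffnorm z / 4) / s"
      by (simp add: field_simps)
    ultimately show "K s = gauss_sum 1 ^ CARD('n) * (quad_char s * chi ((- u) * s + (- ffnorm z / 4) / s))"
      unfolding K_def sum_chi_quadratic_vec[OF s] by (simp add: chi_add[symmetric] mult_ac)
  qed
  also have "\<dots> = gauss_sum 1 ^ CARD('n) * (\<Sum>r\<in>-{0}. quad_char r * chi ((- u) * r + (- ffnorm z / 4) / r))"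
    by (rule sum_distrib_left[symmetric])
  also have "(\<Sum>r\<in>-{0}. quad_char r * chi ((- u) * r + (- ffnorm z / 4) / r))
      = (\<Sum>r\<in>UNIV. quad_char r * chi ((- u) * r + (- ffnorm z / 4) / r))"
    using sum_UNIV_remove_0[of "\<lambda>r. quad_char r * chi ((- u) * r + (- ffnorm z / 4) / r)"] by simp
  finally show ?thesis .
qed

lemma norm_sphere_fourier_le:
  fixes z :: "'a ^ 'n"
  assumes d: "odd CARD('n)"
  shows "norm (\<Sum>m\<in>{m. ffnorm m = u}. chi (vdot m z))
         \<le> (if z = 0 then real CARD('a) ^ (CARD('n) - 1) else 0) + 2 * sqrt (real CARD('a)) ^ (CARD('n) - 1)"
proof -
  define q where "q = real CARD('a)"
  define K where "K = (\<Sum>r\<in>UNIV. quad_char r * chi ((- u) * r + (- ffnorm z / 4) / r))"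
  define c where "c = (if z = 0 then of_nat CARD('a) ^ CARD('n) else (0::complex))"
  have q: "q > 0" "sqrt q * sqrt q = q" by (simp_all add: q_def)
  have pow: "x ^ CARD('n) = x * x ^ (CARD('n) - 1)" for x :: real
    by (simp add: power_eq_if)
  have "q * norm (\<Sum>m\<in>{m. ffnorm m = u}. chi (vdot m z)) = norm (c + gauss_sum 1 ^ CARD('n) * K)"
    unfolding c_def K_def sphere_fourier_eq[OF d, symmetric] by (simp add: norm_mult q_def)
  also have "\<dots> \<le> norm c + norm (gauss_sum 1 ^ CARD('n) * K)"
    by (rule norm_triangle_ineq)
  also have "\<dots> = (if z = 0 then q ^ CARD('n) else 0) + sqrt q ^ CARD('n) * norm K"
    by (simp add: c_def q_def norm_mult norm_power norm_gauss_sum)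
  also have "\<dots> \<le> (if z = 0 then q ^ CARD('n) else 0) + sqrt q ^ CARD('n) * (2 * sqrt q)"
    unfolding K_def q_def by (intro add_left_mono mult_left_mono norm_salie_sum_le) simp
  also have "\<dots> = q * ((if z = 0 then q ^ (CARD('n) - 1) else 0) + 2 * sqrt q ^ (CARD('n) - 1))"
    unfolding pow using q by (simp add: algebra_simps)
  finally show ?thesis using q unfolding q_def by (simp add: mult_le_cancel_left_pos)
qed

lemma sphere_fourier_mass_le:
  fixes A :: "('a ^ 'n) set"
  assumes "odd CARD('n)"
  shows "(\<Sum>m\<in>{m. ffnorm m = u}. (norm (fourier A m))\<^sup>2)
         \<le> real CARD('a) ^ (CARD('n) - 1) * real (card A) + 2 * sqrt (real CARD('a)) ^ (CARD('n) - 1) * real (card A) ^ 2"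
  by (rule sum_norm_fourier_sq_le) (rule norm_sphere_fourier_le[OF assms])

end

section \<open>Counting distances\<close>

definition dist_count :: "('a::comm_ring_1 ^ 'n) set \<Rightarrow> ('a ^ 'n) set \<Rightarrow> 'a \<Rightarrow> nat" where
  "dist_count E F t = card {p \<in> E \<times> F. ffnorm (fst p - snd p) = t}"

lemma dist_set_eq_image: "dist_set E F = (\<lambda>p. ffnorm (fst p - snd p)) ` (E \<times> F)"
  unfolding dist_set_def by force

lemma card_dist_set_cauchy_schwarz:
  fixes E F :: "('a::{comm_ring_1,finite} ^ 'n) set"
  shows "(real (card E) * real (card F))\<^sup>2 \<le> real (card (dist_set E F)) * (\<Sum>t\<in>UNIV. (real (dist_count E F t))\<^sup>2)"
proof -
  define D where "D = dist_set E F"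
  have "(\<Sum>t\<in>D. \<Sum>p\<in>{p\<in>E \<times> F. ffnorm (fst p - snd p) = t}. (1::real)) = (\<Sum>p\<in>E \<times> F. 1)"
    by (rule sum.group) (auto simp: D_def dist_set_eq_image)
  then have "(\<Sum>t\<in>D. 1 * real (dist_count E F t)) = real (card E) * real (card F)"
    by (simp add: dist_count_def card_cartesian_product)
  moreover have "(\<Sum>t\<in>D. 1 * real (dist_count E F t))\<^sup>2 \<le> (\<Sum>t\<in>D. 1\<^sup>2) * (\<Sum>t\<in>D. (real (dist_count E F t))\<^sup>2)"
    by (rule Cauchy_Schwarz_ineq_sum)
  ultimately have "(real (card E) * real (card F))\<^sup>2 \<le> real (card D) * (\<Sum>t\<in>D. (real (dist_count E F t))\<^sup>2)"
    by simp
  also have "\<dots> \<le> real (card D) * (\<Sum>t\<in>UNIV. (real (dist_count E F t))\<^sup>2)"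
    by (intro mult_left_mono sum_mono2) auto
  finally show ?thesis unfolding D_def .
qed

context additive_character
begin

definition dist_sum :: "('a ^ 'n) set \<Rightarrow> ('a ^ 'n) set \<Rightarrow> 'a \<Rightarrow> complex" where
  "dist_sum E F s = (\<Sum>p\<in>E \<times> F. chi (s * ffnorm (fst p - snd p)))"

definition fourier_pairing :: "('a ^ 'n) set \<Rightarrow> ('a ^ 'n) set \<Rightarrow> 'a \<Rightarrow> complex" where
  "fourier_pairing E F r = (\<Sum>m\<in>UNIV. chi (r * ffnorm m) * (fourier E m * cnj (fourier F m)))"

definition sphere_pairing :: "('a ^ 'n) set \<Rightarrow> ('a ^ 'n) set \<Rightarrow> 'a \<Rightarrow> complex" where
  "sphere_pairing E F u = (\<Sum>m\<in>{m. ffnorm m = u}. fourier E m * cnj (fourier F m))"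

lemma dist_sum_eq:
  fixes E F :: "('a ^ 'n) set"
  shows "dist_sum E F s = (\<Sum>t\<in>UNIV. chi (s * t) * of_nat (dist_count E F t))"
proof -
  have "dist_sum E F s = (\<Sum>t\<in>UNIV. \<Sum>p\<in>{p\<in>E \<times> F. ffnorm (fst p - snd p) = t}. chi (s * ffnorm (fst p - snd p)))"
    unfolding dist_sum_def by (rule sum.group[symmetric]) auto
  also have "\<dots> = (\<Sum>t\<in>UNIV. chi (s * t) * of_nat (dist_count E F t))"
    by (intro sum.cong refl) (simp add: dist_count_def mult.commute)
  finally show ?thesis .
qed

lemma sum_norm_dist_sum_sq:
  fixes E F :: "('a ^ 'n) set"
  shows "(\<Sum>s\<in>UNIV. (norm (dist_sum E F s))\<^sup>2) = real CARD('a) * (\<Sum>t\<in>UNIV. (real (dist_count E F t))\<^sup>2)"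
  unfolding dist_sum_eq using parseval[of "\<lambda>t. of_nat (dist_count E F t)"] by simp

lemma dist_sum_0:
  fixes E F :: "('a ^ 'n) set"
  shows "dist_sum E F 0 = of_nat (card E * card F)"
  by (simp add: dist_sum_def card_cartesian_product)

lemma fourier_pairing_eq:
  fixes E F :: "('a ^ 'n) set"
  shows "fourier_pairing E F r = (\<Sum>u\<in>UNIV. chi (r * u) * sphere_pairing E F u)"
proof -
  have "fourier_pairing E F r
      = (\<Sum>u\<in>UNIV. \<Sum>m\<in>{m\<in>UNIV. ffnorm m = u}. chi (r * ffnorm m) * (fourier E m * cnj (fourier F m)))"
    unfolding fourier_pairing_def by (rule sum.group[symmetric]) auto
  also have "\<dots> = (\<Sum>u\<in>UNIV. chi (r * u) * sphere_pairing E F u)"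
    by (intro sum.cong refl) (simp add: sphere_pairing_def sum_distrib_left)
  finally show ?thesis .
qed

lemma norm_sphere_pairing_sq_le:
  fixes E F :: "('a ^ 'n) set"
  shows "(norm (sphere_pairing E F u))\<^sup>2
   \<le> (\<Sum>m\<in>{m. ffnorm m = u}. (norm (fourier E m))\<^sup>2) * (\<Sum>m\<in>{m. ffnorm m = u}. (norm (fourier F m))\<^sup>2)"
proof -
  define S where "S = {m::'a^'n. ffnorm m = u}"
  have "norm (sphere_pairing E F u) \<le> (\<Sum>m\<in>S. norm (fourier E m) * norm (fourier F m))"
    unfolding sphere_pairing_def S_def[symmetric]
    by (rule order.trans[OF norm_sum]) (simp add: norm_mult)
  then have "(norm (sphere_pairing E F u))\<^sup>2 \<le> (\<Sum>m\<in>S. norm (fourier E m) * norm (fourier F m))\<^sup>2"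
    by (intro power_mono) auto
  also have "\<dots> \<le> (\<Sum>m\<in>S. (norm (fourier E m))\<^sup>2) * (\<Sum>m\<in>S. (norm (fourier F m))\<^sup>2)"
    by (rule Cauchy_Schwarz_ineq_sum)
  finally show ?thesis unfolding S_def .
qed

end

context odd_additive_character
begin

lemma gauss_sum_power_mult_dist_sum:
  fixes E F :: "('a ^ 'n) set"
  assumes s: "s \<noteq> 0"
  shows "gauss_sum (- 1 / (4 * s)) ^ CARD('n) * dist_sum E F s = fourier_pairing E F (- 1 / (4 * s))"
proof -
  define r where "r = - 1 / (4 * s)"
  have r: "r \<noteq> 0" unfolding r_def using s four_neq_zero by simp
  have gauss: "gauss_sum r ^ CARD('n) * chi (s * ffnorm z) = (\<Sum>m\<in>UNIV. chi (r * ffnorm m + vdot m z))"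
    for z :: "'a^'n"
  proof -
    have "- ffnorm z / (4 * r) = s * ffnorm z" unfolding r_def using s four_neq_zero by (simp add: field_simps)
    then show ?thesis using sum_chi_quadratic_vec[OF r, of z] by simp
  qed
  have "gauss_sum r ^ CARD('n) * dist_sum E F s
      = (\<Sum>p\<in>E \<times> F. \<Sum>m\<in>UNIV. chi (r * ffnorm m + vdot m (fst p - snd p)))"
    unfolding dist_sum_def sum_distrib_left gauss ..
  also have "\<dots> = (\<Sum>m\<in>UNIV. chi (r * ffnorm m) * (\<Sum>p\<in>E \<times> F. chi (vdot m (fst p)) * cnj (chi (vdot m (snd p)))))"
    by (subst sum.swap) (simp add: chi_add vdot_diff chi_diff sum_distrib_left)
  also have "\<dots> = fourier_pairing E F r"
    unfolding fourier_pairing_def fourier_def cnj_sum sum_product sum.cartesian_product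
    by (simp add: case_prod_beta)
  finally show ?thesis unfolding r_def .
qed

lemma sum_nonzero_norm_dist_sum_sq:
  fixes E F :: "('a ^ 'n) set"
  shows "(\<Sum>s\<in>-{0}. (norm (dist_sum E F s))\<^sup>2) * real CARD('a) ^ CARD('n)
   = (\<Sum>r\<in>-{0}. (norm (fourier_pairing E F r))\<^sup>2)"
proof -
  have "(\<Sum>s\<in>-{0}. (norm (dist_sum E F s))\<^sup>2) * real CARD('a) ^ CARD('n)
      = (\<Sum>s\<in>-{0}. (norm (fourier_pairing E F (- 1 / (4 * s))))\<^sup>2)"
    unfolding sum_distrib_right
  proof (intro sum.cong refl)
    fix s :: 'a assume "s \<in> -{0}"
    then have s: "s \<noteq> 0" by simp
    then have "- 1 / (4 * s) \<noteq> 0" using four_neq_zero by simp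
    then have "norm (fourier_pairing E F (- 1 / (4 * s))) = sqrt (real CARD('a)) ^ CARD('n) * norm (dist_sum E F s)"
      unfolding gauss_sum_power_mult_dist_sum[OF s, symmetric] by (simp add: norm_mult norm_power norm_gauss_sum)
    then show "(norm (dist_sum E F s))\<^sup>2 * real CARD('a) ^ CARD('n) = (norm (fourier_pairing E F (- 1 / (4 * s))))\<^sup>2"
      using power_mult[of "sqrt (real CARD('a))" 2 "CARD('n)"]
      by (simp add: power_mult_distrib flip: power_mult mult.commute[of 2])
  qed
  also have "\<dots> = (\<Sum>r\<in>-{0}. (norm (fourier_pairing E F r))\<^sup>2)"
    by (rule sum.reindex_bij_witness[of _ "\<lambda>r. - 1 / (4 * r)" "\<lambda>s. - 1 / (4 * s)"])
       (use four_neq_zero in \<open>auto simp: field_simps\<close>)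
  finally show ?thesis .
qed


text \<open>Parseval in the dilation parameter \<open>s\<close>, the Gauss sum identity relating \<open>dist_sum\<close> at \<open>s\<close>
  to \<open>fourier_pairing\<close> at \<open>-1/(4s)\<close>, Parseval again, and Cauchy--Schwarz on each sphere.\<close>

lemma sum_dist_count_sq_le:
  fixes E F :: "('a ^ 'n) set"
  assumes M: "\<And>u. (\<Sum>m\<in>{m. ffnorm m = u}. (norm (fourier E m))\<^sup>2) \<le> M"
  shows "real CARD('a) * (\<Sum>t\<in>UNIV. (real (dist_count E F t))\<^sup>2)
         \<le> (real (card E) * real (card F))\<^sup>2 + real CARD('a) * M * real (card F)"
proof -
  define q where "q = real CARD('a)"
  have q: "q > 0" by (simp add: q_def)
  have "(\<Sum>s\<in>-{0}. (norm (dist_sum E F s))\<^sup>2) * q ^ CARD('n) = (\<Sum>r\<in>-{0}. (norm (fourier_pairing E F r))\<^sup>2)"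
    unfolding q_def by (rule sum_nonzero_norm_dist_sum_sq)
  also have "\<dots> \<le> (\<Sum>r\<in>UNIV. (norm (fourier_pairing E F r))\<^sup>2)"
    by (rule sum_mono2) auto
  also have "\<dots> = q * (\<Sum>u\<in>UNIV. (norm (sphere_pairing E F u))\<^sup>2)"
    unfolding fourier_pairing_eq q_def by (rule parseval)
  also have "\<dots> \<le> q * (\<Sum>u\<in>UNIV. M * (\<Sum>m\<in>{m. ffnorm m = u}. (norm (fourier F m))\<^sup>2))"
    by (intro mult_left_mono sum_mono order.trans[OF norm_sphere_pairing_sq_le] mult_right_mono M)
      (simp_all add: q_def sum_nonneg)
  also have "\<dots> = (q * M * real (card F)) * q ^ CARD('n)"
    by (simp add: sum_distrib_left[symmetric] sum_spheres plancherel q_def)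
  finally have "(\<Sum>s\<in>-{0}. (norm (dist_sum E F s))\<^sup>2) \<le> q * M * real (card F)"
    using q by simp
  moreover have "q * (\<Sum>t\<in>UNIV. (real (dist_count E F t))\<^sup>2)
      = (real (card E) * real (card F))\<^sup>2 + (\<Sum>s\<in>-{0}. (norm (dist_sum E F s))\<^sup>2)"
    unfolding q_def sum_norm_dist_sum_sq[symmetric] sum_UNIV_remove_0[of "\<lambda>s. (norm (dist_sum E F s))\<^sup>2"]
    by (simp add: dist_sum_0 del: of_nat_mult add: of_nat_mult[symmetric])
  ultimately show ?thesis unfolding q_def by simp
qed

lemma card_dist_set_ge_min:
  fixes E F :: "('a ^ 'n) set"
  assumes "E \<noteq> {}" "F \<noteq> {}" "M > 0"
    and M: "\<And>u. (\<Sum>m\<in>{m. ffnorm m = u}. (norm (fourier E m))\<^sup>2) \<le> M"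
  shows "real (card (dist_set E F))
         \<ge> min (real CARD('a) / 2) ((real (card E) * real (card F))\<^sup>2 / (2 * (M * real (card F))))"
proof -
  define q where "q = real CARD('a)"
  define X where "X = (real (card E) * real (card F))\<^sup>2"
  define Y where "Y = M * real (card F)"
  define Q where "Q = (\<Sum>t\<in>UNIV. (real (dist_count E F t))\<^sup>2)"
  define D where "D = real (card (dist_set E F))"
  have q: "q > 0" by (simp add: q_def)
  have X: "X > 0" unfolding X_def using assms(1,2) by (simp add: card_gt_0_iff)
  have "Q \<le> X / q + Y"
    using sum_dist_count_sq_le[OF M, of F] q unfolding q_def X_def Y_def Q_def by (simp add: field_simps)
  then have "Q \<le> 2 * max (X / q) Y" by linarith
  moreover have "X \<le> D * Q" unfolding X_def D_def Q_def by (rule card_dist_set_cauchy_schwarz)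
  moreover have "D \<ge> 0" by (simp add: D_def)
  ultimately have "X \<le> D * (2 * max (X / q) Y)"
    by (meson mult_left_mono order.trans)
  moreover have "2 * max (X / q) Y > 0" using X q by (simp add: less_max_iff_disj)
  ultimately have "X / (2 * max (X / q) Y) \<le> D" by (simp add: pos_divide_le_eq)
  moreover have "X / (2 * max (X / q) Y) = min (q / 2) (X / (2 * Y))"
    using X q \<open>M > 0\<close> assms(2) by (auto simp: max_def min_def field_simps Y_def card_gt_0_iff)
  ultimately show ?thesis unfolding q_def X_def Y_def D_def by simp
qed


lemma sphere_fourier_mass_le_odd:
  fixes A :: "('a ^ 'n) set"
  assumes d: "CARD('n) = 2 * k + 1"
  shows "(\<Sum>m\<in>{m. ffnorm m = u}. (norm (fourier A m))\<^sup>2)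
         \<le> real CARD('a) ^ (2 * k) * real (card A) + 2 * real CARD('a) ^ k * real (card A) ^ 2"
proof -
  have "sqrt (real CARD('a)) ^ (2 * k) = real CARD('a) ^ k"
    by (simp add: power_mult)
  then show ?thesis using sphere_fourier_mass_le[of A u] d by simp
qed

lemma card_dist_set_ge_large:
  fixes E F :: "('a ^ 'n) set"
  assumes "E \<noteq> {}" "F \<noteq> {}"
  shows "real (card (dist_set E F))
         \<ge> min (real CARD('a) / 2) (real (card E) * real (card F) / (2 * real CARD('a) ^ CARD('n)))"
proof -
  define M where "M = real CARD('a) ^ CARD('n) * real (card E)"
  have "M > 0" unfolding M_def using assms(1) by (simp add: card_gt_0_iff)
  moreover have "(real (card E) * real (card F))\<^sup>2 / (2 * (M * real (card F)))
      = real (card E) * real (card F) / (2 * real CARD('a) ^ CARD('n))"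
    unfolding M_def using assms by (simp add: card_gt_0_iff power2_eq_square field_simps)
  ultimately show ?thesis
    using card_dist_set_ge_min[OF assms, of M] sphere_fourier_mass_le_plancherel[of E] M_def by simp
qed

lemma card_dist_set_ge_small:
  fixes E F :: "('a ^ 'n) set"
  assumes d: "CARD('n) = 2 * k + 1" and "E \<noteq> {}" "F \<noteq> {}" and small: "card E < CARD('a) ^ k"
  shows "real (card (dist_set E F))
         \<ge> min (real CARD('a) / 2) (real (card E) * real (card F) / (8 * real CARD('a) ^ (2 * k)))"
proof -
  define q where "q = real CARD('a)"
  define e where "e = real (card E)"
  define f where "f = real (card F)"
  have pos: "q > 0" "e > 0" "f > 0" unfolding q_def e_def f_def using assms by (simp_all add: card_gt_0_iff)
  have "e \<le> q ^ k" using small unfolding e_def q_def by (simp flip: of_nat_power)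
  then have "2 * q ^ k * e\<^sup>2 \<le> 2 * q ^ (2 * k) * e"
    using mult_left_mono[of e "q ^ k" "q ^ k * e"] pos
    by (simp add: power2_eq_square power_mult power_mult_distrib mult_ac)
  then have mass: "(\<Sum>m\<in>{m. ffnorm m = u}. (norm (fourier E m))\<^sup>2) \<le> 3 * q ^ (2 * k) * e" for u
    using sphere_fourier_mass_le_odd[OF d, of E u] unfolding q_def e_def by linarith
  have "3 * q ^ (2 * k) * e > 0" using pos by simp
  from card_dist_set_ge_min[OF assms(2,3) this mass]
  have "real (card (dist_set E F)) \<ge> min (q / 2) ((e * f)\<^sup>2 / (2 * (3 * q ^ (2 * k) * e * f)))"
    unfolding q_def e_def f_def .
  moreover have "e * f / (8 * q ^ (2 * k)) \<le> (e * f)\<^sup>2 / (2 * (3 * q ^ (2 * k) * e * f))"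
    using pos by (simp add: power2_eq_square field_simps)
  ultimately show ?thesis unfolding q_def e_def f_def by (meson min.mono order.refl order.trans)
qed

lemma card_dist_set_ge_medium:
  fixes E F :: "('a ^ 'n) set"
  assumes d: "CARD('n) = 2 * k + 1" and "E \<noteq> {}" "F \<noteq> {}" and medium: "CARD('a) ^ k \<le> card E"
  shows "real (card (dist_set E F)) \<ge> min (real CARD('a) / 2) (real (card F) / (8 * real CARD('a) ^ k))"
proof -
  define q where "q = real CARD('a)"
  define e where "e = real (card E)"
  define f where "f = real (card F)"
  have pos: "q > 0" "e > 0" "f > 0" unfolding q_def e_def f_def using assms by (simp_all add: card_gt_0_iff)
  have "q ^ k \<le> e" using medium unfolding e_def q_def by (simp flip: of_nat_power)
  then have "q ^ (2 * k) * e \<le> q ^ k * e\<^sup>2"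
    using mult_left_mono[of "q ^ k" e "q ^ k * e"] pos
    by (simp add: power2_eq_square power_mult power_mult_distrib mult_ac)
  then have mass: "(\<Sum>m\<in>{m. ffnorm m = u}. (norm (fourier E m))\<^sup>2) \<le> 3 * q ^ k * e\<^sup>2" for u
    using sphere_fourier_mass_le_odd[OF d, of E u] unfolding q_def e_def by linarith
  have "3 * q ^ k * e\<^sup>2 > 0" using pos by simp
  from card_dist_set_ge_min[OF assms(2,3) this mass]
  have "real (card (dist_set E F)) \<ge> min (q / 2) ((e * f)\<^sup>2 / (2 * (3 * q ^ k * e\<^sup>2 * f)))"
    unfolding q_def e_def f_def .
  moreover have "f / (8 * q ^ k) \<le> (e * f)\<^sup>2 / (2 * (3 * q ^ k * e\<^sup>2 * f))"
    using pos by (simp add: power2_eq_square field_simps)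
  ultimately show ?thesis unfolding q_def e_def f_def by (meson min.mono order.refl order.trans)
qed

end

theorem mainTheorem1:
  fixes E F :: "(('a::{field,finite}) ^ 'n) set"
  defines "q \<equiv> CARD('a)" and "d \<equiv> CARD('n)"
  assumes "CHAR('a) > 2"
    and "odd d" and "d \<ge> 3"
    and "E \<noteq> {}" and "F \<noteq> {}"
  shows "(card E < q ^ ((d - 1) div 2) \<longrightarrow>
            real (card (dist_set E F)) \<ge>
              min (real q / 2) (real (card E) * real (card F) / (8 * real q ^ (d - 1))))
       \<and> (q ^ ((d - 1) div 2) \<le> card E \<and> card E < q ^ ((d + 1) div 2) \<longrightarrow>
            real (card (dist_set E F)) \<ge>
              min (real q / 2) (real (card F) / (8 * real q ^ ((d - 1) div 2))))
       \<and> (q ^ ((d + 1) div 2) \<le> card E \<and> card E \<le> q ^ d \<longrightarrow>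
            real (card (dist_set E F)) \<ge>
              min (real q / 2) (real (card E) * real (card F) / (2 * real q ^ d)))"
proof -
  obtain chi :: "'a \<Rightarrow> complex" where "additive_character chi"
    using exists_additive_character by blast
  moreover have "(2::'a) \<noteq> 0"
    using \<open>CHAR('a) > 2\<close> of_nat_eq_0_iff_char_dvd[of 2, where 'a = 'a] by (auto dest: dvd_imp_le)
  ultimately interpret odd_additive_character chi
    by (simp add: odd_additive_character_def odd_additive_character_axioms_def)
  obtain k where k: "d = 2 * k + 1" using \<open>odd d\<close> oddE by blast
  then have "d - 1 = 2 * k" "(d - 1) div 2 = k" by simp_all
  then show ?thesis
    using card_dist_set_ge_small[of k E F] card_dist_set_ge_medium[of k E F]
      card_dist_set_ge_large[of E F] k assms(6,7)
    unfolding q_def d_def by auto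
qed

end
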